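(* Let $\nu(x)=\sum_{k\ge0}\nu_kL_k(x)$ and $\sigma(x)=\sum_{k\ge0}\sigma_kL_k(x)$ on $I=(-1,1)$ and, for $m,n\ge2$, let $$a_{m,n}:=\int_{-1}^1\nu\,D\eta_m\,D\eta_n\,dx+\int_{-1}^1\sigma\,\eta_m\,\eta_n\,dx.$$ If there exist $\eta>0$ and a constant $C_\eta>0$ depending only on $\eta$ such that $|\nu_k|,|\sigma_k|\le C_\eta e^{-\eta k}$ for all $k\ge0$, then $|a_{m,n}|\le Ce^{-\eta|n-m|}$ for all $n,m\ge2$, where $C$ is a constant depending only on $\eta$.
   Context: $I=(-1,1)$, $D=d/dx$. $L_k$ denotes the Legendre polynomial of degree $k$ with $L_k(1)=1$. The Babuška–Shen basis is $\eta_k(x)=\frac{1}{\sqrt{4k-2}}(L_{k-2}(x)-L_k(x))$, $k\ge2$. *)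

theory Defs
  imports "HOL-Analysis.Analysis"
begin

text \<open>Legendre polynomials normalised by L_k(1) = 1, via Bonnet's recurrence
  (n+2) L_{n+2}(x) = (2n+3) x L_{n+1}(x) - (n+1) L_n(x).\<close>
fun legendre :: "nat \<Rightarrow> real \<Rightarrow> real" where
  "legendre 0 x = 1"
| "legendre (Suc 0) x = x"
| "legendre (Suc (Suc n)) x =
     ((2 * real n + 3) * x * legendre (Suc n) x - (real n + 1) * legendre n x) / (real n + 2)"

definition bs_eta :: "nat \<Rightarrow> real \<Rightarrow> real" where
  "bs_eta k x = (legendre (k - 2) x - legendre k x) / sqrt (4 * real k - 2)"

definition legendre_series :: "(nat \<Rightarrow> real) \<Rightarrow> real \<Rightarrow> real" where
  "legendre_series c x = (\<Sum>k. c k * legendre k x)"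

definition a_entry :: "(nat \<Rightarrow> real) \<Rightarrow> (nat \<Rightarrow> real) \<Rightarrow> nat \<Rightarrow> nat \<Rightarrow> real" where
  "a_entry \<nu> \<sigma> m n =
     integral {-1..1} (\<lambda>x. legendre_series \<nu> x * deriv (bs_eta m) x * deriv (bs_eta n) x)
   + integral {-1..1} (\<lambda>x. legendre_series \<sigma> x * bs_eta m x * bs_eta n x)"

end

theory Submission
  imports Defs "HOL-Computational_Algebra.Polynomial"
begin

text \<open>
  Write \<open>r = e^{-\<eta>}\<close>. On \<open>[-1,1]\<close> we have \<open>|L_k| \<le> 1\<close>, so the Legendre series of \<open>\<nu>\<close> differs from
  its partial sum of order \<open>K\<close> by at most \<open>C r^K/(1-r)\<close>. For \<open>m \<le> n\<close>, \<open>D\<eta>\<^sub>m D\<eta>\<^sub>n\<close> is a multiple of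
  \<open>L_{m-1} L_{n-1}\<close> and \<open>\<eta>\<^sub>m \<eta>\<^sub>n\<close> a combination of \<open>L_{m-2}, L_m\<close> times \<open>L_{n-2}, L_n\<close>; by orthogonality
  both are annihilated by \<open>L_k\<close> for \<open>k < n - m\<close> (resp. \<open>k < n - m - 2\<close>), so only the tail of the
  series contributes to \<open>a_{m,n}\<close>. The tail is bounded pointwise, and the remaining factor has
  integral of size \<open>O(1)\<close> because the basis is normalised so that \<open>\<integral> (D\<eta>\<^sub>m)\<^sup>2 = 1\<close> and \<open>|\<eta>\<^sub>m| \<le> 1\<close>.
\<close>

section \<open>Recurrences, derivatives and polynomial form of the Legendre polynomials\<close>

lemma legendre_Suc_Suc_mult:
  "(real n + 2) * legendre (Suc (Suc n)) x =
     (2 * real n + 3) * x * legendre (Suc n) x - (real n + 1) * legendre n x"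
proof -
  have "real n + 2 \<noteq> 0" by simp
  then show ?thesis by (simp add: field_simps)
qed

declare legendre.simps(3)[simp del]

lemma legendre_at_1: "legendre n 1 = 1"
proof -
  have "x = 1 \<Longrightarrow> legendre n x = 1" for x
    by (induction n x rule: legendre.induct) (simp_all add: field_simps legendre.simps)
  then show ?thesis by simp
qed

lemma legendre_at_minus_1: "legendre n (-1) = (-1) ^ n"
proof -
  have "x = -1 \<Longrightarrow> legendre n x = (-1) ^ n" for x
    by (induction n x rule: legendre.induct) (simp_all add: field_simps legendre.simps)
  then show ?thesis by simp
qed

text \<open>Bonnet's recurrence centred at \<open>n\<close>; for \<open>n = 0\<close> the truncated index \<open>n - 1\<close> is harmless.\<close>
lemma bonnet_recurrence:
  "(2 * real n + 1) * x * legendre n x = (real n + 1) * legendre (Suc n) x + real n * legendre (n - 1) x"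
proof (cases n)
  case (Suc k)
  then show ?thesis using legendre_Suc_Suc_mult[of k x] by (simp add: algebra_simps)
qed simp

lemma x_mult_legendre:
  "x * legendre n x =
     (real n + 1) / (2 * real n + 1) * legendre (Suc n) x + real n / (2 * real n + 1) * legendre (n - 1) x"
proof -
  have "(2 * real n + 1) * (x * legendre n x) = (2 * real n + 1) *
     ((real n + 1) / (2 * real n + 1) * legendre (Suc n) x + real n / (2 * real n + 1) * legendre (n - 1) x)"
    unfolding distrib_left mult.assoc[symmetric] using bonnet_recurrence[of n x] by (simp add: ac_simps)
  then show ?thesis by simp
qed

fun legendre_deriv :: "nat \<Rightarrow> real \<Rightarrow> real" where
  "legendre_deriv 0 x = 0"
| "legendre_deriv (Suc 0) x = 1"
| "legendre_deriv (Suc (Suc n)) x =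
     ((2 * real n + 3) * (legendre (Suc n) x + x * legendre_deriv (Suc n) x)
      - (real n + 1) * legendre_deriv n x) / (real n + 2)"

lemma legendre_deriv_Suc_Suc_mult:
  "(real n + 2) * legendre_deriv (Suc (Suc n)) x =
     (2 * real n + 3) * (legendre (Suc n) x + x * legendre_deriv (Suc n) x) - (real n + 1) * legendre_deriv n x"
proof -
  have "real n + 2 \<noteq> 0" by simp
  then show ?thesis by (simp add: field_simps)
qed

declare legendre_deriv.simps(3)[simp del]

lemma has_real_derivative_legendre: "(legendre n has_real_derivative legendre_deriv n x) (at x)"
proof (induction n x rule: legendre.induct)
  case (3 n x)
  have "((\<lambda>x. (2 * real n + 3) * x * legendre (Suc n) x - (real n + 1) * legendre n x)
     has_real_derivative (2 * real n + 3) * (legendre (Suc n) x + x * legendre_deriv (Suc n) x)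
       - (real n + 1) * legendre_deriv n x) (at x)"
    by (auto intro!: derivative_eq_intros 3 simp: algebra_simps)
  then show ?case
    unfolding legendre.simps(3)[abs_def] legendre_deriv.simps by (rule DERIV_cdivide)
qed simp_all

lemma legendre_deriv_identities:
  "x * legendre_deriv (Suc n) x - legendre_deriv n x = (real n + 1) * legendre (Suc n) x \<and>
   (x\<^sup>2 - 1) * legendre_deriv (Suc n) x = (real n + 1) * (x * legendre (Suc n) x - legendre n x)"
proof (induction n)
  case 0
  then show ?case by (simp add: power2_eq_square)
next
  case (Suc n)
  let ?L = "\<lambda>k. legendre k x" and ?D = "\<lambda>k. legendre_deriv k x"
  have B: "?D n = x * ?D (Suc n) - (real n + 1) * ?L (Suc n)"
    and C: "(x\<^sup>2 - 1) * ?D (Suc n) = (real n + 1) * (x * ?L (Suc n) - ?L n)"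
    using Suc by simp_all
  have "(real n + 2) * ?D (Suc (Suc n)) = (real n + 2) * ((real n + 2) * ?L (Suc n) + x * ?D (Suc n))"
    unfolding legendre_deriv_Suc_Suc_mult B by (simp add: algebra_simps)
  then have A: "?D (Suc (Suc n)) = (real n + 2) * ?L (Suc n) + x * ?D (Suc n)"
    by simp
  have L: "(real n + 2) * ?L (Suc (Suc n)) = (2 * real n + 3) * x * ?L (Suc n) - (real n + 1) * ?L n"
    by (rule legendre_Suc_Suc_mult)
  have "x * ?D (Suc (Suc n)) - ?D (Suc n) = (real (Suc n) + 1) * ?L (Suc (Suc n))"
  proof -
    have "x * ?D (Suc (Suc n)) - ?D (Suc n) = (real n + 2) * x * ?L (Suc n) + (x\<^sup>2 - 1) * ?D (Suc n)"
      by (simp add: A algebra_simps power2_eq_square)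
    also have "\<dots> = (real n + 2) * ?L (Suc (Suc n))"
      unfolding C L by (simp add: algebra_simps)
    finally show ?thesis by (simp add: algebra_simps)
  qed
  moreover have "(x\<^sup>2 - 1) * ?D (Suc (Suc n)) = (real (Suc n) + 1) * (x * ?L (Suc (Suc n)) - ?L (Suc n))"
  proof -
    have "(x\<^sup>2 - 1) * ?D (Suc (Suc n)) = (x\<^sup>2 - 1) * (real n + 2) * ?L (Suc n) + x * ((x\<^sup>2 - 1) * ?D (Suc n))"
      by (simp add: A algebra_simps)
    also have "\<dots> = x * ((real n + 2) * ?L (Suc (Suc n))) - (real n + 2) * ?L (Suc n)"
      unfolding C L by (simp add: algebra_simps power2_eq_square)
    finally show ?thesis by (simp add: algebra_simps)
  qed
  ultimately show ?case by blast
qed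

lemma legendre_deriv_Suc_Suc_diff:
  "legendre_deriv (Suc (Suc n)) x - legendre_deriv n x = (2 * real n + 3) * legendre (Suc n) x"
proof -
  have xD: "x * legendre_deriv (Suc n) x = legendre_deriv n x + (real n + 1) * legendre (Suc n) x"
    using legendre_deriv_identities[of x n] by simp
  have "(real n + 2) * legendre_deriv (Suc (Suc n)) x
      = (real n + 2) * ((2 * real n + 3) * legendre (Suc n) x + legendre_deriv n x)"
    unfolding legendre_deriv_Suc_Suc_mult distrib_left[of _ _ "x * _"] xD by (simp add: algebra_simps)
  then show ?thesis by simp
qed

fun legendre_poly :: "nat \<Rightarrow> real poly" where
  "legendre_poly 0 = 1"
| "legendre_poly (Suc 0) = [:0, 1:]"
| "legendre_poly (Suc (Suc n)) = smult (1 / (real n + 2))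
     (smult (2 * real n + 3) (pCons 0 (legendre_poly (Suc n))) - smult (real n + 1) (legendre_poly n))"

lemma poly_legendre_poly: "poly (legendre_poly n) = legendre n"
proof
  show "poly (legendre_poly n) x = legendre n x" for x
    by (induction n rule: legendre_poly.induct) (simp_all add: legendre.simps field_simps)
qed

lemma degree_legendre_poly: "degree (legendre_poly n) \<le> n"
proof (induction n rule: legendre_poly.induct)
  case (3 n)
  have "degree (smult (2 * real n + 3) (pCons 0 (legendre_poly (Suc n)))) \<le> Suc (Suc n)"
    using 3(1) by (metis degree_pCons_le degree_smult_le le_trans Suc_le_mono)
  moreover have "degree (smult (real n + 1) (legendre_poly n)) \<le> Suc (Suc n)"
    using 3(2) degree_smult_le le_trans by fastforce
  ultimately show ?case by (simp add: le_trans[OF degree_smult_le] degree_diff_le)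
qed simp_all

lemma continuous_on_legendre [continuous_intros]:
  "continuous_on S f \<Longrightarrow> continuous_on S (\<lambda>x. legendre n (f x))"
  unfolding poly_legendre_poly[symmetric] by (intro continuous_intros)

section \<open>Orthogonality and norms\<close>

lemma integral_legendre_eq_0:
  assumes "n \<ge> 1"
  shows "integral {-1..1} (legendre n) = 0"
proof -
  obtain k where n: "n = Suc k" using assms by (cases n) auto
  define F where "F x = (legendre (Suc (Suc k)) x - legendre k x) / (2 * real k + 3)" for x
  have "(F has_real_derivative legendre n x) (at x)" for x
  proof -
    have "(F has_real_derivative (legendre_deriv (Suc (Suc k)) x - legendre_deriv k x) / (2 * real k + 3)) (at x)"
      unfolding F_def by (intro DERIV_cdivide DERIV_diff has_real_derivative_legendre)
    then show ?thesis using legendre_deriv_Suc_Suc_diff[of k x] n by simp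
  qed
  then have "(legendre n has_integral (F 1 - F (-1))) {-1..1}"
    by (intro fundamental_theorem_of_calculus)
       (auto simp: has_real_derivative_iff_has_vector_derivative intro: has_vector_derivative_at_within)
  moreover have "F 1 - F (-1) = 0"
    unfolding F_def by (simp add: legendre_at_1 legendre_at_minus_1)
  ultimately show ?thesis by (simp add: integral_unique)
qed

lemma integral_power_legendre_eq_0:
  assumes "j < n"
  shows "integral {-1..1} (\<lambda>x. x ^ j * legendre n x) = 0"
  using assms
proof (induction j arbitrary: n)
  case 0
  then show ?case using integral_legendre_eq_0 by simp
next
  case (Suc j)
  have "x ^ Suc j * legendre n x = (real n + 1) / (2 * real n + 1) * (x ^ j * legendre (Suc n) x)
      + real n / (2 * real n + 1) * (x ^ j * legendre (n - 1) x)" for x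
  proof -
    have "x ^ Suc j * legendre n x = x ^ j * (x * legendre n x)" by (simp add: ac_simps)
    also have "\<dots> = (real n + 1) / (2 * real n + 1) * (x ^ j * legendre (Suc n) x)
      + real n / (2 * real n + 1) * (x ^ j * legendre (n - 1) x)"
      unfolding x_mult_legendre by (simp add: algebra_simps)
    finally show ?thesis .
  qed
  then have "integral {-1..1} (\<lambda>x. x ^ Suc j * legendre n x)
      = (real n + 1) / (2 * real n + 1) * integral {-1..1} (\<lambda>x. x ^ j * legendre (Suc n) x)
      + real n / (2 * real n + 1) * integral {-1..1} (\<lambda>x. x ^ j * legendre (n - 1) x)"
    by (simp add: integral_add integrable_continuous_interval continuous_intros)
  also have "\<dots> = 0" using Suc by simp
  finally show ?case .
qed

lemma integral_poly_legendre_eq_0: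
  assumes "degree p < n"
  shows "integral {-1..1} (\<lambda>x. poly p x * legendre n x) = 0"
proof -
  have "integral {-1..1} (\<lambda>x. poly p x * legendre n x)
      = integral {-1..1} (\<lambda>x. \<Sum>i\<le>degree p. coeff p i * (x ^ i * legendre n x))"
    by (simp add: poly_altdef sum_distrib_right mult.assoc)
  also have "\<dots> = (\<Sum>i\<le>degree p. coeff p i * integral {-1..1} (\<lambda>x. x ^ i * legendre n x))"
    by (simp add: integral_sum integrable_continuous_interval continuous_intros)
  also have "\<dots> = 0"
    using assms by (intro sum.neutral) (simp add: integral_power_legendre_eq_0)
  finally show ?thesis .
qed

lemma legendre_orthogonal:
  assumes "j < n"
  shows "integral {-1..1} (\<lambda>x. legendre j x * legendre n x) = 0"
  using integral_poly_legendre_eq_0[of "legendre_poly j" n] degree_legendre_poly[of j] assms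
  by (simp add: poly_legendre_poly)

lemma integral_legendre_square: "integral {-1..1} (\<lambda>x. legendre n x ^ 2) = 2 / (2 * real n + 1)"
proof (induction n)
  case (Suc k)
  let ?L = "\<lambda>j x. legendre j x"
  \<comment> \<open>\<open>\<integral> x L_{k+1} L_k\<close> is computed by expanding either \<open>x L_k\<close> or \<open>x L_{k+1}\<close>.\<close>
  have "integral {-1..1} (\<lambda>x. ?L (Suc k) x * (x * ?L k x))
      = (real k + 1) / (2 * real k + 1) * integral {-1..1} (\<lambda>x. ?L (Suc k) x ^ 2)
        + real k / (2 * real k + 1) * integral {-1..1} (\<lambda>x. ?L (k - 1) x * ?L (Suc k) x)"
    unfolding x_mult_legendre[of _ k]
    by (simp add: algebra_simps power2_eq_square integral_add integrable_continuous_interval continuous_intros)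
  moreover have "integral {-1..1} (\<lambda>x. ?L (Suc k) x * (x * ?L k x))
      = integral {-1..1} (\<lambda>x. ?L k x * (x * ?L (Suc k) x))"
    by (simp add: ac_simps)
  also have "\<dots> = (real k + 2) / (2 * real k + 3) * integral {-1..1} (\<lambda>x. ?L k x * ?L (Suc (Suc k)) x)
        + (real k + 1) / (2 * real k + 3) * integral {-1..1} (\<lambda>x. ?L k x ^ 2)"
    unfolding x_mult_legendre[of _ "Suc k"] distrib_left mult.left_commute[of "?L k _"]
    by (simp add: power2_eq_square integral_add integrable_continuous_interval continuous_intros add_ac)
  ultimately have "(real k + 1) / (2 * real k + 1) * integral {-1..1} (\<lambda>x. ?L (Suc k) x ^ 2)
      = (real k + 1) / (2 * real k + 1) * (2 / (2 * real (Suc k) + 1))"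
    using Suc legendre_orthogonal[of k "Suc (Suc k)"] legendre_orthogonal[of "k - 1" "Suc k"]
    by (simp add: algebra_simps)
  moreover have "(real k + 1) / (2 * real k + 1) \<noteq> 0" by simp
  ultimately show ?case by (metis mult_left_cancel)
qed simp

text \<open>
  A Lyapunov function for the three-term recurrence: it is non-increasing in \<open>n\<close>, dominates
  \<open>(1 - x\<^sup>2) L_{n+1}(x)\<^sup>2\<close>, and starts at \<open>(1 - x\<^sup>2)(1 + x\<^sup>2)/2 \<le> 1 - x\<^sup>2\<close>.
\<close>
definition legendre_energy :: "nat \<Rightarrow> real \<Rightarrow> real" where
  "legendre_energy n x = (1 - x\<^sup>2) * legendre (Suc n) x ^ 2
     + (real n + 1) / (real n + 2) * (legendre n x - x * legendre (Suc n) x) ^ 2"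

lemma legendre_energy_Suc_le: "legendre_energy (Suc n) x \<le> legendre_energy n x"
proof -
  define u v w where "u = legendre (Suc n) x" and "v = legendre n x" and "w = legendre (Suc (Suc n)) x"
  define e where "e = (real n + 1) * (v - x * u) / (real n + 2)"
  define s where "s = 1 - x\<^sup>2"
  have w: "w = x * u - e"
  proof -
    have "(real n + 2) * e = (real n + 1) * (v - x * u)" unfolding e_def by simp
    then have "(real n + 2) * w = (real n + 2) * (x * u - e)"
      unfolding w_def legendre_Suc_Suc_mult u_def[symmetric] v_def[symmetric] right_diff_distrib
      by (simp add: algebra_simps)
    then show ?thesis by simp
  qed
  have e: "(real n + 1) / (real n + 2) * (v - x * u)\<^sup>2 = (real n + 2) / (real n + 1) * e\<^sup>2"
  proof -
    have rescale: "p / q * D\<^sup>2 = q / p * (p * D / q)\<^sup>2" if "p > 0" "q > 0" for p q D :: real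
      using that by (simp add: field_simps power2_eq_square)
    show ?thesis unfolding e_def by (rule rescale) auto
  qed
  have "legendre_energy (Suc n) x = s * (x * u - e)\<^sup>2 + (real n + 2) / (real n + 3) * (s * u + x * e)\<^sup>2"
    unfolding legendre_energy_def u_def[symmetric] w_def[symmetric] s_def w
    by (simp add: algebra_simps power2_eq_square)
  also have "\<dots> \<le> s * (x * u - e)\<^sup>2 + (s * u + x * e)\<^sup>2"
    by (intro add_left_mono mult_left_le_one_le) auto
  also have "\<dots> = s * u\<^sup>2 + e\<^sup>2"
    unfolding s_def by (simp add: algebra_simps power2_eq_square)
  also have "\<dots> \<le> s * u\<^sup>2 + (real n + 2) / (real n + 1) * e\<^sup>2"
    using mult_right_mono[of 1 "(real n + 2) / (real n + 1)" "e\<^sup>2"] by simp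
  also have "\<dots> = legendre_energy n x"
    unfolding legendre_energy_def e[symmetric] u_def v_def s_def ..
  finally show ?thesis .
qed

lemma abs_legendre_le_1:
  assumes "x \<in> {-1..1}"
  shows "\<bar>legendre n x\<bar> \<le> 1"
proof (cases n)
  case (Suc k)
  show ?thesis
  proof (cases "\<bar>x\<bar> = 1")
    case True
    then show ?thesis by (auto simp: abs_if legendre_at_1 legendre_at_minus_1 split: if_splits)
  next
    case False
    then have s: "1 - x\<^sup>2 > 0" using assms by (auto simp: abs_square_less_1 abs_le_iff)
    have "(1 - x\<^sup>2) * legendre (Suc k) x ^ 2 \<le> legendre_energy k x"
      unfolding legendre_energy_def by simp
    also have "\<dots> \<le> legendre_energy 0 x"
      by (induction k) (auto intro: order.trans[OF legendre_energy_Suc_le])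
    also have "\<dots> = (1 - x\<^sup>2) * ((1 + x\<^sup>2) / 2)"
      unfolding legendre_energy_def by (simp add: field_simps power2_eq_square)
    also have "\<dots> \<le> (1 - x\<^sup>2) * 1"
      using s assms by (intro mult_left_mono) (auto simp: abs_square_le_1)
    finally have "legendre (Suc k) x ^ 2 \<le> 1" using s by simp
    then show ?thesis using Suc by (simp add: abs_square_le_1)
  qed
qed simp

section \<open>The Babu\v{s}ka--Shen basis\<close>

lemma deriv_bs_eta:
  "deriv (bs_eta (Suc (Suc n))) x = - sqrt ((2 * real n + 3) / 2) * legendre (Suc n) x"
proof -
  define t where "t = 2 * real n + 3"
  have t: "t > 0" unfolding t_def by simp
  have D: "(bs_eta (Suc (Suc n)) has_real_derivative
      (legendre_deriv n x - legendre_deriv (Suc (Suc n)) x) / sqrt (4 * real (Suc (Suc n)) - 2)) (at x)"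
    unfolding bs_eta_def[abs_def] by (auto intro!: DERIV_cdivide DERIV_diff has_real_derivative_legendre)
  have s: "sqrt (4 * real (Suc (Suc n)) - 2) = sqrt 2 * sqrt t"
    unfolding t_def real_sqrt_mult[symmetric] by (simp add: algebra_simps)
  have q: "t / (sqrt 2 * sqrt t) = sqrt (t / 2)"
  proof -
    have "t / (sqrt 2 * sqrt t) = (t / sqrt t) / sqrt 2" by (simp add: mult.commute)
    also have "\<dots> = sqrt t / sqrt 2" using t by (simp only: real_div_sqrt less_imp_le)
    finally show ?thesis by (simp only: real_sqrt_divide)
  qed
  have d: "legendre_deriv n x - legendre_deriv (Suc (Suc n)) x = - (t * legendre (Suc n) x)"
    using legendre_deriv_Suc_Suc_diff[of n x] unfolding t_def by simp
  have "(legendre_deriv n x - legendre_deriv (Suc (Suc n)) x) / sqrt (4 * real (Suc (Suc n)) - 2) = - sqrt (t / 2) * legendre (Suc n) x"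
    unfolding d s q[symmetric] by simp
  with D show ?thesis unfolding t_def by (metis DERIV_imp_deriv)
qed

lemma integral_deriv_bs_eta_square: "integral {-1..1} (\<lambda>x. deriv (bs_eta (Suc (Suc n))) x ^ 2) = 1"
  by (simp add: deriv_bs_eta power_mult_distrib integral_legendre_square)

lemma abs_bs_eta_le_1:
  assumes "x \<in> {-1..1}"
  shows "\<bar>bs_eta (Suc (Suc n)) x\<bar> \<le> 1"
proof -
  have "\<bar>legendre n x - legendre (Suc (Suc n)) x\<bar> \<le> 2"
    using abs_legendre_le_1[OF assms, of n] abs_legendre_le_1[OF assms, of "Suc (Suc n)"] by linarith
  moreover have "sqrt (4 * real (Suc (Suc n)) - 2) \<ge> 2"
    by (rule real_le_rsqrt) (simp add: power2_eq_square)
  ultimately show ?thesis unfolding bs_eta_def by (simp add: abs_div divide_le_eq_1)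
qed

lemma bs_eta_eq_poly: obtains p where "degree p \<le> Suc (Suc n)" "bs_eta (Suc (Suc n)) = poly p"
proof
  let ?p = "smult (1 / sqrt (4 * real (Suc (Suc n)) - 2)) (legendre_poly n - legendre_poly (Suc (Suc n)))"
  show "bs_eta (Suc (Suc n)) = poly ?p"
    by (simp add: fun_eq_iff bs_eta_def poly_legendre_poly del: legendre_poly.simps)
  have "degree (legendre_poly n - legendre_poly (Suc (Suc n))) \<le> Suc (Suc n)"
    using degree_legendre_poly[of n] degree_legendre_poly[of "Suc (Suc n)"] by (intro degree_diff_le) auto
  then show "degree ?p \<le> Suc (Suc n)" by simp
qed

lemma deriv_bs_eta_eq_poly: obtains p where "degree p \<le> Suc n" "deriv (bs_eta (Suc (Suc n))) = poly p"
proof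
  let ?p = "smult (- sqrt ((2 * real n + 3) / 2)) (legendre_poly (Suc n))"
  show "deriv (bs_eta (Suc (Suc n))) = poly ?p"
    by (simp add: fun_eq_iff deriv_bs_eta poly_legendre_poly del: legendre_poly.simps)
  show "degree ?p \<le> Suc n" using degree_legendre_poly[of "Suc n"] by simp
qed

lemma integral_poly_bs_eta_eq_0:
  assumes "degree q < n"
  shows "integral {-1..1} (\<lambda>x. poly q x * bs_eta (Suc (Suc n)) x) = 0"
proof -
  let ?s = "sqrt (4 * real (Suc (Suc n)) - 2)"
  have "(\<lambda>x. poly q x * bs_eta (Suc (Suc n)) x)
      = (\<lambda>x. (poly q x * legendre n x - poly q x * legendre (Suc (Suc n)) x) / ?s)"
    by (simp add: fun_eq_iff bs_eta_def right_diff_distrib)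
  then have "integral {-1..1} (\<lambda>x. poly q x * bs_eta (Suc (Suc n)) x)
      = (integral {-1..1} (\<lambda>x. poly q x * legendre n x)
         - integral {-1..1} (\<lambda>x. poly q x * legendre (Suc (Suc n)) x)) / ?s"
    by (simp only: integral_divide, subst integral_diff)
       (auto intro!: integrable_continuous_interval continuous_intros)
  then show ?thesis using assms by (simp add: integral_poly_legendre_eq_0)
qed

lemma integral_poly_deriv_bs_eta_eq_0:
  assumes "degree q < Suc n"
  shows "integral {-1..1} (\<lambda>x. poly q x * deriv (bs_eta (Suc (Suc n))) x) = 0"
proof -
  have "(\<lambda>x. poly q x * deriv (bs_eta (Suc (Suc n))) x)
      = (\<lambda>x. - sqrt ((2 * real n + 3) / 2) * (poly q x * legendre (Suc n) x))"
    by (simp add: fun_eq_iff deriv_bs_eta mult_ac)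
  then show ?thesis using integral_poly_legendre_eq_0[OF assms] by simp
qed

section \<open>Legendre series with geometrically decaying coefficients\<close>

lemma abs_legendre_series_minus_partial_sum_le:
  assumes "M \<ge> 0" "0 \<le> r" "r < 1" "\<And>k. \<bar>c k\<bar> \<le> M * r ^ k" and x: "x \<in> {-1..1}"
  shows "\<bar>legendre_series c x - (\<Sum>k<K. c k * legendre k x)\<bar> \<le> M * r ^ K / (1 - r)"
proof -
  have term_le: "norm (c (j + K) * legendre (j + K) x) \<le> M * r ^ K * r ^ j" for j
  proof -
    have "\<bar>c (j + K)\<bar> * \<bar>legendre (j + K) x\<bar> \<le> M * r ^ (j + K) * 1"
      using assms abs_legendre_le_1[OF x] by (intro mult_mono) auto
    then show ?thesis by (simp add: abs_mult power_add mult_ac)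
  qed
  have geom: "summable (\<lambda>j. M * r ^ K * r ^ j)"
    using assms by (intro summable_mult summable_geometric) auto
  have tail: "summable (\<lambda>j. norm (c (j + K) * legendre (j + K) x))"
    by (rule summable_comparison_test[OF _ geom]) (use term_le in auto)
  then have summable: "summable (\<lambda>k. c k * legendre k x)"
    using summable_norm_cancel summable_iff_shift by blast
  then have "legendre_series c x - (\<Sum>k<K. c k * legendre k x) = (\<Sum>j. c (j + K) * legendre (j + K) x)"
    unfolding legendre_series_def suminf_split_initial_segment[OF summable, of K] by simp
  also have "\<bar>\<dots>\<bar> \<le> (\<Sum>j. norm (c (j + K) * legendre (j + K) x))"
    using summable_norm[OF tail] by simp
  also have "\<dots> \<le> (\<Sum>j. M * r ^ K * r ^ j)"
    by (rule suminf_le[OF term_le tail geom])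
  also have "\<dots> = M * r ^ K / (1 - r)"
    using assms by (simp add: suminf_mult suminf_geometric)
  finally show ?thesis .
qed

lemma continuous_on_legendre_series:
  assumes "0 \<le> r" "r < 1" "\<And>k. \<bar>c k\<bar> \<le> M * r ^ k"
  shows "continuous_on {-1..1} (legendre_series c)"
proof -
  have term_le: "norm (c k * legendre k x) \<le> M * r ^ k" if "x \<in> {-1..1}" for k x
  proof -
    have "\<bar>c k\<bar> * \<bar>legendre k x\<bar> \<le> M * r ^ k * 1"
      using assms abs_legendre_le_1[OF that, of k] by (intro mult_mono) (auto intro: order_trans[OF abs_ge_zero])
    then show ?thesis by (simp add: abs_mult)
  qed
  have "summable (\<lambda>k. M * r ^ k)"
    using assms by (intro summable_mult summable_geometric) auto
  then have uniform: "uniform_limit {-1..1} (\<lambda>n x. \<Sum>k<n. c k * legendre k x) (legendre_series c) sequentially"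
    unfolding legendre_series_def[abs_def] by (rule Weierstrass_m_test_ev[rotated]) (use term_le in auto)
  show ?thesis
    by (rule uniform_limit_theorem[OF _ uniform]) (auto intro!: always_eventually continuous_intros)
qed

lemma abs_integral_legendre_series_le:
  fixes g h :: "real \<Rightarrow> real" and c :: "nat \<Rightarrow> real"
  assumes "M \<ge> 0" "0 \<le> r" "r < 1" "\<And>k. \<bar>c k\<bar> \<le> M * r ^ k"
    and g: "continuous_on {-1..1} g" and h: "continuous_on {-1..1} h"
    and g_le_h: "\<And>x. x \<in> {-1..1} \<Longrightarrow> \<bar>g x\<bar> \<le> h x"
    and orth: "\<And>k. k < K \<Longrightarrow> integral {-1..1} (\<lambda>x. legendre k x * g x) = 0"
  shows "\<bar>integral {-1..1} (\<lambda>x. legendre_series c x * g x)\<bar> \<le> M * r ^ K / (1 - r) * integral {-1..1} h"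
proof -
  define P where "P x = (\<Sum>k<K. c k * legendre k x)" for x
  have S: "continuous_on {-1..1} (legendre_series c)"
    using assms by (intro continuous_on_legendre_series)
  have "integral {-1..1} (\<lambda>x. P x * g x) = (\<Sum>k<K. c k * integral {-1..1} (\<lambda>x. legendre k x * g x))"
    unfolding P_def sum_distrib_right
    by (subst integral_sum) (auto simp: mult.assoc intro!: integrable_continuous_interval continuous_intros g)
  also have "\<dots> = 0" using orth by simp
  finally have "integral {-1..1} (\<lambda>x. legendre_series c x * g x)
      = integral {-1..1} (\<lambda>x. (legendre_series c x - P x) * g x)"
    by (simp add: left_diff_distrib integral_diff integrable_continuous_interval continuous_intros S g P_def)
  also have "\<bar>\<dots>\<bar> \<le> integral {-1..1} (\<lambda>x. M * r ^ K / (1 - r) * h x)"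
  proof (rule Henstock_Kurzweil_Integration.integral_norm_bound_integral[where 'a = real, unfolded real_norm_def])
    fix x :: real
    assume x: "x \<in> {-1..1}"
    have "\<bar>legendre_series c x - P x\<bar> * \<bar>g x\<bar> \<le> M * r ^ K / (1 - r) * h x"
      using abs_legendre_series_minus_partial_sum_le[OF assms(1-4) x] g_le_h[OF x] assms(1-3)
      unfolding P_def by (intro mult_mono) auto
    then show "\<bar>(legendre_series c x - P x) * g x\<bar> \<le> M * r ^ K / (1 - r) * h x"
      by (simp add: abs_mult)
  qed (use assms(3) in \<open>auto simp: P_def intro!: integrable_continuous_interval continuous_intros S g h\<close>)
  finally show ?thesis by simp
qed

section \<open>Decay of the stiffness and mass entries\<close>

lemma integral_legendre_mult_poly_eq_0:
  assumes orth: "\<And>q. degree q < D \<Longrightarrow> integral {-1..1} (\<lambda>x. poly q x * f x) = 0"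
    and "k + degree p < D"
  shows "integral {-1..1} (\<lambda>x. legendre k x * (poly p x * f x)) = 0"
proof -
  have "degree (legendre_poly k * p) < D"
    using degree_mult_le[of "legendre_poly k" p] degree_legendre_poly[of k] assms(2) by linarith
  then show ?thesis
    using orth[of "legendre_poly k * p"] by (simp add: poly_legendre_poly mult.assoc)
qed

lemma abs_stiffness_integral_le:
  assumes "M \<ge> 0" "0 \<le> r" "r < 1" "\<And>k. \<bar>c k\<bar> \<le> M * r ^ k" and "a \<le> b"
  shows "\<bar>integral {-1..1} (\<lambda>x. legendre_series c x
            * deriv (bs_eta (Suc (Suc a))) x * deriv (bs_eta (Suc (Suc b))) x)\<bar>
         \<le> M * r ^ (b - a) / (1 - r)"
proof -
  obtain p where p: "degree p \<le> Suc a" "deriv (bs_eta (Suc (Suc a))) = poly p"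
    by (rule deriv_bs_eta_eq_poly)
  let ?u = "deriv (bs_eta (Suc (Suc a)))" and ?v = "deriv (bs_eta (Suc (Suc b)))"
  have "\<bar>integral {-1..1} (\<lambda>x. legendre_series c x * (?u x * ?v x))\<bar>
      \<le> M * r ^ (b - a) / (1 - r) * integral {-1..1} (\<lambda>x. (?u x ^ 2 + ?v x ^ 2) / 2)"
  proof (rule abs_integral_legendre_series_le[OF assms(1-4)])
    show "\<bar>?u x * ?v x\<bar> \<le> (?u x ^ 2 + ?v x ^ 2) / 2" for x
      using sum_squares_bound[of "\<bar>?u x\<bar>" "\<bar>?v x\<bar>"] by (simp add: abs_mult)
    show "integral {-1..1} (\<lambda>x. legendre k x * (?u x * ?v x)) = 0" if "k < b - a" for k
      using integral_legendre_mult_poly_eq_0[OF integral_poly_deriv_bs_eta_eq_0[where n = b], where k = k and p = p]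
        that p assms(5) by simp
  qed (simp_all add: deriv_bs_eta continuous_intros)
  also have "integral {-1..1} (\<lambda>x. (?u x ^ 2 + ?v x ^ 2) / 2) = 1"
  proof -
    have "(\<lambda>x. deriv (bs_eta (Suc (Suc n))) x ^ 2) integrable_on {-1..1}" for n
      by (intro integrable_continuous_interval) (simp add: deriv_bs_eta continuous_intros)
    then show ?thesis by (simp add: integral_add integral_deriv_bs_eta_square)
  qed
  finally show ?thesis by (simp add: mult.assoc)
qed

lemma abs_mass_integral_le:
  assumes "M \<ge> 0" "0 \<le> r" "r < 1" "\<And>k. \<bar>c k\<bar> \<le> M * r ^ k" and "a \<le> b"
  shows "\<bar>integral {-1..1} (\<lambda>x. legendre_series c x * bs_eta (Suc (Suc a)) x * bs_eta (Suc (Suc b)) x)\<bar>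
         \<le> 2 * M * r ^ (b - a - 2) / (1 - r)"
proof -
  obtain p where p: "degree p \<le> Suc (Suc a)" "bs_eta (Suc (Suc a)) = poly p"
    by (rule bs_eta_eq_poly)
  obtain q where q: "bs_eta (Suc (Suc b)) = poly q"
    by (rule bs_eta_eq_poly)
  let ?u = "bs_eta (Suc (Suc a))" and ?v = "bs_eta (Suc (Suc b))"
  have "\<bar>integral {-1..1} (\<lambda>x. legendre_series c x * (?u x * ?v x))\<bar>
      \<le> M * r ^ (b - a - 2) / (1 - r) * integral {-1..1} (\<lambda>x::real. 1::real)"
  proof (rule abs_integral_legendre_series_le[OF assms(1-4)])
    show "\<bar>?u x * ?v x\<bar> \<le> 1" if "x \<in> {-1..1}" for x
      using abs_bs_eta_le_1[OF that, of a] abs_bs_eta_le_1[OF that, of b]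
      by (simp add: abs_mult mult_le_one)
    show "integral {-1..1} (\<lambda>x. legendre k x * (?u x * ?v x)) = 0" if "k < b - a - 2" for k
      using integral_legendre_mult_poly_eq_0[OF integral_poly_bs_eta_eq_0[where n = b], where k = k and p = p]
        that p by simp
  qed (simp_all add: p q continuous_intros)
  then show ?thesis by (simp add: mult_ac)
qed

lemma abs_a_entry_le:
  assumes "M \<ge> 0" "0 < r" "r < 1"
    and "\<And>k. \<bar>\<nu> k\<bar> \<le> M * r ^ k" "\<And>k. \<bar>\<sigma> k\<bar> \<le> M * r ^ k" and "a \<le> b"
  shows "\<bar>a_entry \<nu> \<sigma> (Suc (Suc a)) (Suc (Suc b))\<bar> \<le> M / (1 - r) * (1 + 2 / r\<^sup>2) * r ^ (b - a)"
proof -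
  have "r ^ (b - a - 2 + 2) \<le> r ^ (b - a)"
    using assms(2,3) by (intro power_decreasing) auto
  then have "r ^ (b - a - 2) * r\<^sup>2 \<le> r ^ (b - a)"
    by (simp only: power_add)
  then have "r ^ (b - a - 2) \<le> r ^ (b - a) / r\<^sup>2"
    using assms(2) by (simp add: pos_le_divide_eq)
  then have "2 * M * r ^ (b - a - 2) / (1 - r) \<le> 2 * M * (r ^ (b - a) / r\<^sup>2) / (1 - r)"
    using assms(1,3) by (intro divide_right_mono mult_left_mono) auto
  then have "\<bar>a_entry \<nu> \<sigma> (Suc (Suc a)) (Suc (Suc b))\<bar>
      \<le> M * r ^ (b - a) / (1 - r) + 2 * M * (r ^ (b - a) / r\<^sup>2) / (1 - r)"
    using abs_stiffness_integral_le[OF assms(1) _ assms(3,4,6)] abs_mass_integral_le[OF assms(1) _ assms(3,5,6)]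
      assms(2) unfolding a_entry_def by linarith
  also have "\<dots> = M / (1 - r) * (1 + 2 / r\<^sup>2) * r ^ (b - a)"
    by (simp add: divide_inverse algebra_simps)
  finally show ?thesis .
qed

lemma a_entry_commute: "a_entry \<nu> \<sigma> m n = a_entry \<nu> \<sigma> n m"
  unfolding a_entry_def by (simp add: mult_ac)

lemma abs_a_entry_le_power_dist:
  assumes "M \<ge> 0" "0 < r" "r < 1"
    and "\<And>k. \<bar>\<nu> k\<bar> \<le> M * r ^ k" "\<And>k. \<bar>\<sigma> k\<bar> \<le> M * r ^ k" and "2 \<le> m" "2 \<le> n"
  shows "\<bar>a_entry \<nu> \<sigma> m n\<bar> \<le> M / (1 - r) * (1 + 2 / r\<^sup>2) * r ^ nat \<bar>int n - int m\<bar>"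
proof -
  obtain a b where ab: "m = Suc (Suc a)" "n = Suc (Suc b)"
    using assms(6,7) by (metis add_2_eq_Suc le_Suc_ex)
  show ?thesis
  proof (cases "a \<le> b")
    case True
    then show ?thesis using abs_a_entry_le[OF assms(1-5) True] ab by (simp add: nat_diff_distrib)
  next
    case False
    then show ?thesis using abs_a_entry_le[OF assms(1-5), of b a] ab a_entry_commute[of \<nu> \<sigma> m n]
      by (simp add: nat_diff_distrib)
  qed
qed

theorem mainTheorem4:
  fixes \<eta> C\<^sub>\<eta> :: real
  assumes "\<eta> > 0" and "C\<^sub>\<eta> > 0"
  shows "\<exists>C > 0. \<forall>\<nu> \<sigma> :: nat \<Rightarrow> real.
           (\<forall>k. \<bar>\<nu> k\<bar> \<le> C\<^sub>\<eta> * exp (- \<eta> * real k) \<and> \<bar>\<sigma> k\<bar> \<le> C\<^sub>\<eta> * exp (- \<eta> * real k)) \<longrightarrow>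
           (\<forall>m n. 2 \<le> m \<longrightarrow> 2 \<le> n \<longrightarrow>
              \<bar>a_entry \<nu> \<sigma> m n\<bar> \<le> C * exp (- \<eta> * \<bar>real n - real m\<bar>))"
proof -
  define r where "r = exp (- \<eta>)"
  have r: "0 < r" "r < 1" unfolding r_def using assms by auto
  have exp_eq: "exp (- \<eta> * real k) = r ^ k" for k
    unfolding r_def using exp_of_nat_mult[of k "- \<eta>"] by (simp add: mult.commute)
  have exp_dist: "exp (- \<eta> * \<bar>real n - real m\<bar>) = r ^ nat \<bar>int n - int m\<bar>" for m n :: nat
    using exp_eq[of "nat \<bar>int n - int m\<bar>"] by simp
  define C where "C = C\<^sub>\<eta> / (1 - r) * (1 + 2 / r\<^sup>2)"
  have "C > 0" unfolding C_def using r assms by (simp add: add_pos_pos)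
  moreover have "\<bar>a_entry \<nu> \<sigma> m n\<bar> \<le> C * exp (- \<eta> * \<bar>real n - real m\<bar>)"
    if "\<forall>k. \<bar>\<nu> k\<bar> \<le> C\<^sub>\<eta> * exp (- \<eta> * real k) \<and> \<bar>\<sigma> k\<bar> \<le> C\<^sub>\<eta> * exp (- \<eta> * real k)"
      and "2 \<le> m" "2 \<le> n" for \<nu> \<sigma> :: "nat \<Rightarrow> real" and m n
    using abs_a_entry_le_power_dist[of "C\<^sub>\<eta>" r \<nu> \<sigma> m n] that assms(2) r
    unfolding C_def exp_dist exp_eq by simp
  ultimately show ?thesis by blast
qed

end
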